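(* Let $k\in\mathbb N$ be odd. Then the polynomial $2^{2(k-1)}(a^k-b^k)^2-(a-b)^{2k}\in\mathbb R[a,b]$ is a sum of squares of polynomials (of degree at most $k$). *)

theory Defs
  imports Complex_Main
begin

definition bipoly_deg_le :: "nat \<Rightarrow> (real \<Rightarrow> real \<Rightarrow> real) \<Rightarrow> bool" where
  "bipoly_deg_le d q \<longleftrightarrow>
     (\<exists>c :: nat \<Rightarrow> nat \<Rightarrow> real. \<forall>a b. q a b = (\<Sum>i\<le>d. \<Sum>j\<le>d - i. c i j * a ^ i * b ^ j))"

end

theory Submission imports Defs begin

text \<open>Substitute a = x + y, b = x - y. For odd k the binomial theorem gives
  a^k - b^k = 2 (t + y^k), where t is the sum of the terms C(k,j) x^(k-j) y^j over odd j < k.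
  Hence the polynomial equals 2^(2k) (t^2 + 2 t y^k), and each term 2 C(k,j) x^(k-j) y^(k+j)
  of 2 t y^k is a square because k - j and k + j are even. All square roots involved are
  polynomials of degree k in x, y, hence in a, b.\<close>

lemma finite_exponents_deg_le [simp]: "finite {(i, j). i + j \<le> (d::nat)}"
  by (rule finite_subset[of _ "{..d} \<times> {..d}"]) auto

lemma bipoly_deg_le_iff:
  "bipoly_deg_le d q \<longleftrightarrow>
     (\<exists>c. \<forall>a b. q a b = (\<Sum>(i, j)\<in>{(i, j). i + j \<le> d}. c i j * a ^ i * b ^ j))"
proof -
  have "{(i, j). i + j \<le> d} = Sigma {..d} (\<lambda>i. {..d - i})" by auto
  then show ?thesis unfolding bipoly_deg_le_def by (simp add: sum.Sigma)
qed

lemma bipoly_deg_le_const: "bipoly_deg_le d (\<lambda>a b. r)"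
proof -
  have "(\<Sum>(i, j)\<in>{(i, j). i + j \<le> d}. (if (i, j) = (0, 0) then r else 0) * a ^ i * b ^ j) = r"
    for a b :: real
    by (subst sum.mono_neutral_right[of _ "{(0, 0)}"]) (auto split: if_splits)
  then show ?thesis
    unfolding bipoly_deg_le_iff by (intro exI[of _ "\<lambda>i j. if (i, j) = (0, 0) then r else 0"]) simp
qed

lemma bipoly_deg_le_add:
  assumes "bipoly_deg_le d p" "bipoly_deg_le d q"
  shows "bipoly_deg_le d (\<lambda>a b. p a b + q a b)"
proof -
  obtain c c' where
    "\<forall>a b. p a b = (\<Sum>(i, j)\<in>{(i, j). i + j \<le> d}. c i j * a ^ i * b ^ j)"
    "\<forall>a b. q a b = (\<Sum>(i, j)\<in>{(i, j). i + j \<le> d}. c' i j * a ^ i * b ^ j)"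
    using assms unfolding bipoly_deg_le_iff by blast
  then have "p a b + q a b = (\<Sum>(i, j)\<in>{(i, j). i + j \<le> d}. (c i j + c' i j) * a ^ i * b ^ j)"
    for a b
    by (simp add: sum.distrib[symmetric] case_prod_beta algebra_simps)
  then show ?thesis unfolding bipoly_deg_le_iff by (intro exI[of _ "\<lambda>i j. c i j + c' i j"]) blast
qed

lemma bipoly_deg_le_sum:
  assumes "finite A" "\<And>x. x \<in> A \<Longrightarrow> bipoly_deg_le d (f x)"
  shows "bipoly_deg_le d (\<lambda>a b. \<Sum>x\<in>A. f x a b)"
  using assms
  by (induction A rule: finite_induct) (auto intro: bipoly_deg_le_const bipoly_deg_le_add)

lemma bipoly_deg_le_mult:
  assumes "bipoly_deg_le d p" "bipoly_deg_le e q"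
  shows "bipoly_deg_le (d + e) (\<lambda>a b. p a b * q a b)"
proof -
  let ?E = "\<lambda>n. {(i, j). i + j \<le> (n::nat)}"
  define m :: "real \<Rightarrow> real \<Rightarrow> nat \<times> nat \<Rightarrow> real" where "m a b u = a ^ fst u * b ^ snd u" for a b u
  obtain c c' where
    "\<forall>a b. p a b = (\<Sum>(i, j)\<in>?E d. c i j * a ^ i * b ^ j)"
    "\<forall>a b. q a b = (\<Sum>(i, j)\<in>?E e. c' i j * a ^ i * b ^ j)"
    using assms unfolding bipoly_deg_le_iff by blast
  then have
    c: "\<And>a b. p a b = (\<Sum>s\<in>?E d. case_prod c s * m a b s)" and
    c': "\<And>a b. q a b = (\<Sum>t\<in>?E e. case_prod c' t * m a b t)"
    by (simp_all add: m_def case_prod_beta mult.assoc)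
  define g :: "(nat \<times> nat) \<times> nat \<times> nat \<Rightarrow> nat \<times> nat"
    where "g x = (fst (fst x) + fst (snd x), snd (fst x) + snd (snd x))" for x
  define C where "C u = (\<Sum>x\<in>{x \<in> ?E d \<times> ?E e. g x = u}. case_prod c (fst x) * case_prod c' (snd x))" for u
  have "p a b * q a b = (\<Sum>u\<in>?E (d + e). C u * m a b u)" for a b
  proof -
    have "p a b * q a b = (\<Sum>x\<in>?E d \<times> ?E e. case_prod c (fst x) * case_prod c' (snd x) * m a b (g x))"
      unfolding c c' sum_product sum.cartesian_product
      by (rule sum.cong) (auto simp: m_def g_def power_add algebra_simps)
    also have "\<dots> = (\<Sum>u\<in>?E (d + e). \<Sum>x\<in>{x \<in> ?E d \<times> ?E e. g x = u}.
                       case_prod c (fst x) * case_prod c' (snd x) * m a b (g x))"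
      by (rule sum.group[symmetric]) (auto simp: g_def)
    also have "\<dots> = (\<Sum>u\<in>?E (d + e). C u * m a b u)"
      unfolding C_def sum_distrib_right by (intro sum.cong) auto
    finally show ?thesis .
  qed
  then show ?thesis
    unfolding bipoly_deg_le_iff m_def
    by (intro exI[of _ "\<lambda>i j. C (i, j)"]) (simp add: case_prod_beta mult.assoc)
qed

lemma bipoly_deg_le_cmult: "bipoly_deg_le d p \<Longrightarrow> bipoly_deg_le d (\<lambda>a b. r * p a b)"
  using bipoly_deg_le_mult[OF bipoly_deg_le_const[of 0 r]] by simp

lemma bipoly_deg_le_linear: "bipoly_deg_le 1 (\<lambda>a b. \<alpha> * a + \<beta> * b)"
  unfolding bipoly_deg_le_def
  by (intro exI[of _ "\<lambda>i j. if (i, j) = (1, 0) then \<alpha> else if (i, j) = (0, 1) then \<beta> else 0"])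
     (simp add: atMost_Suc)

lemma bipoly_deg_le_power:
  "bipoly_deg_le d p \<Longrightarrow> bipoly_deg_le (n * d) (\<lambda>a b. p a b ^ n)"
  by (induction n) (auto simp: bipoly_deg_le_const dest: bipoly_deg_le_mult)

lemma bipoly_deg_le_linear_monomial:
  assumes "bipoly_deg_le 1 x" "bipoly_deg_le 1 y" "i + j = d"
  shows "bipoly_deg_le d (\<lambda>a b. x a b ^ i * y a b ^ j)"
proof -
  have "bipoly_deg_le (i * 1 + j * 1) (\<lambda>a b. x a b ^ i * y a b ^ j)"
    by (rule bipoly_deg_le_mult[OF bipoly_deg_le_power[OF assms(1)] bipoly_deg_le_power[OF assms(2)]])
  then show ?thesis using assms(3) by simp
qed

definition odd_binomial_sum :: "nat \<Rightarrow> real \<Rightarrow> real \<Rightarrow> real" where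
  "odd_binomial_sum k x y = (\<Sum>j<k. if odd j then real (k choose j) * x ^ (k - j) * y ^ j else 0)"

definition odd_binomial_sqrt :: "nat \<Rightarrow> nat \<Rightarrow> real \<Rightarrow> real \<Rightarrow> real" where
  "odd_binomial_sqrt k j x y =
     (if odd j then sqrt (2 * real (k choose j)) * x ^ ((k - j) div 2) * y ^ ((k + j) div 2) else 0)"

lemma power_add_minus_power_diff_odd:
  assumes "odd k"
  shows "(x + y) ^ k - (x - y) ^ k = 2 * (odd_binomial_sum k x y + y ^ k)"
proof -
  have "(x + y) ^ k - (x - y) ^ k =
          (\<Sum>j\<le>k. real (k choose j) * y ^ j * x ^ (k - j) - real (k choose j) * (- y) ^ j * x ^ (k - j))"
    using binomial_ring[of y x k] binomial_ring[of "-y" x k]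
    by (simp add: add.commute sum_subtractf)
  also have "\<dots> = (\<Sum>j\<le>k. if odd j then 2 * (real (k choose j) * x ^ (k - j) * y ^ j) else 0)"
    by (rule sum.cong) auto
  also have "\<dots> = 2 * (odd_binomial_sum k x y + y ^ k)"
    using assms
    by (simp add: odd_binomial_sum_def lessThan_Suc_atMost[symmetric] sum_distrib_left
        distrib_left if_distrib cong: if_cong)
  finally show ?thesis .
qed

lemma odd_binomial_sqrt_square:
  assumes "odd k" "j < k"
  shows "(odd_binomial_sqrt k j x y)\<^sup>2 =
           (if odd j then 2 * real (k choose j) * x ^ (k - j) * y ^ (k + j) else 0)"
proof (cases "odd j")
  case True
  with assms have "k - j = 2 * ((k - j) div 2)" "k + j = 2 * ((k + j) div 2)" by presburger+
  then have "x ^ (k - j) = (x ^ ((k - j) div 2))\<^sup>2" "y ^ (k + j) = (y ^ ((k + j) div 2))\<^sup>2"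
    by (metis power_mult mult.commute)+
  then show ?thesis
    using True by (simp add: odd_binomial_sqrt_def power_mult_distrib)
qed (simp add: odd_binomial_sqrt_def)

lemma two_mult_power_odd_binomial_sum_eq_squares:
  assumes "odd k"
  shows "2 * y ^ k * odd_binomial_sum k x y = (\<Sum>j<k. (odd_binomial_sqrt k j x y)\<^sup>2)"
  unfolding odd_binomial_sum_def sum_distrib_left
  by (rule sum.cong) (auto simp: odd_binomial_sqrt_square[OF assms] power_add)

lemma odd_power_diff_sos:
  assumes "odd k"
  shows "2 ^ (2 * (k - 1)) * ((x + y) ^ k - (x - y) ^ k)\<^sup>2 - (2 * y) ^ (2 * k) =
           2 ^ (2 * k) * ((odd_binomial_sum k x y)\<^sup>2 + (\<Sum>j<k. (odd_binomial_sqrt k j x y)\<^sup>2))"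
proof -
  have "2 * k = 2 * (k - 1) + 2" using assms by (cases k) auto
  then have "(2::real) ^ (2 * k) = 4 * 2 ^ (2 * (k - 1))" by (simp add: power_add)
  moreover have "(2 * y) ^ (2 * k) = 2 ^ (2 * k) * (y ^ k)\<^sup>2"
    by (simp add: power_mult_distrib power_mult mult.commute)
  moreover have "c * (2 * (t + s))\<^sup>2 - 4 * c * s\<^sup>2 = 4 * c * (t\<^sup>2 + 2 * s * t)" for c t s :: real
    by algebra
  ultimately show ?thesis
    unfolding power_add_minus_power_diff_odd[OF assms]
      two_mult_power_odd_binomial_sum_eq_squares[OF assms, symmetric]
    by (simp add: mult.assoc)
qed

lemma bipoly_deg_le_odd_binomial_sum:
  assumes "bipoly_deg_le 1 x" "bipoly_deg_le 1 y"
  shows "bipoly_deg_le k (\<lambda>a b. odd_binomial_sum k (x a b) (y a b))"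
  unfolding odd_binomial_sum_def
proof (intro bipoly_deg_le_sum)
  fix j assume "j \<in> {..<k}"
  then have "bipoly_deg_le k (\<lambda>a b. x a b ^ (k - j) * y a b ^ j)"
    by (intro bipoly_deg_le_linear_monomial[OF assms]) simp
  from bipoly_deg_le_cmult[OF this, of "real (k choose j)"]
  show "bipoly_deg_le k (\<lambda>a b. if odd j then real (k choose j) * x a b ^ (k - j) * y a b ^ j else 0)"
    by (cases "odd j") (simp_all add: mult.assoc bipoly_deg_le_const)
qed simp

lemma bipoly_deg_le_odd_binomial_sqrt:
  assumes "bipoly_deg_le 1 x" "bipoly_deg_le 1 y" "odd k" "j < k"
  shows "bipoly_deg_le k (\<lambda>a b. odd_binomial_sqrt k j (x a b) (y a b))"
proof (cases "odd j")
  case True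
  with assms(3,4) have "(k - j) div 2 + (k + j) div 2 = k" by presburger
  then have "bipoly_deg_le k (\<lambda>a b. x a b ^ ((k - j) div 2) * y a b ^ ((k + j) div 2))"
    by (rule bipoly_deg_le_linear_monomial[OF assms(1,2)])
  then show ?thesis
    using True by (auto simp: odd_binomial_sqrt_def mult.assoc dest: bipoly_deg_le_cmult)
qed (simp add: odd_binomial_sqrt_def bipoly_deg_le_const)

theorem mainTheorem17:
  fixes k :: nat
  assumes "odd k"
  shows "\<exists>(m::nat) (q :: nat \<Rightarrow> real \<Rightarrow> real \<Rightarrow> real).
           (\<forall>l<m. bipoly_deg_le k (q l)) \<and>
           (\<forall>a b :: real. 2 ^ (2 * (k - 1)) * (a ^ k - b ^ k)\<^sup>2 - (a - b) ^ (2 * k)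
                          = (\<Sum>l<m. (q l a b)\<^sup>2))"
proof -
  define x where "x a b = 1/2 * a + 1/2 * b" for a b :: real
  define y where "y a b = 1/2 * a + (-1/2) * b" for a b :: real
  define q where "q l a b = 2 ^ k * (if l < k then odd_binomial_sqrt k l (x a b) (y a b)
                                    else odd_binomial_sum k (x a b) (y a b))" for l a b
  have x: "bipoly_deg_le 1 x" and y: "bipoly_deg_le 1 y"
    unfolding x_def y_def by (rule bipoly_deg_le_linear)+
  have "bipoly_deg_le k (q l)" for l
    unfolding q_def
    using bipoly_deg_le_odd_binomial_sqrt[OF x y assms] bipoly_deg_le_odd_binomial_sum[OF x y]
    by (cases "l < k") (auto intro: bipoly_deg_le_cmult)
  moreover have "2 ^ (2 * (k - 1)) * (a ^ k - b ^ k)\<^sup>2 - (a - b) ^ (2 * k) = (\<Sum>l<Suc k. (q l a b)\<^sup>2)"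
    for a b
  proof -
    have xy: "x a b + y a b = a" "x a b - y a b = b" "2 * y a b = a - b"
      by (simp_all add: x_def y_def)
    have "2 ^ (2 * (k - 1)) * (a ^ k - b ^ k)\<^sup>2 - (a - b) ^ (2 * k) =
        2 ^ (2 * k) * ((odd_binomial_sum k (x a b) (y a b))\<^sup>2 +
                       (\<Sum>l<k. (odd_binomial_sqrt k l (x a b) (y a b))\<^sup>2))"
      by (rule odd_power_diff_sos[OF assms, of "x a b" "y a b", unfolded xy])
    also have "\<dots> = (\<Sum>l<Suc k. (q l a b)\<^sup>2)"
      by (simp add: q_def power_mult_distrib sum_distrib_left power_mult mult.commute distrib_left)
    finally show ?thesis .
  qed
  ultimately show ?thesis by blast
qed

end
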